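(* Let $d>0$ and let $\tilde V\in C^1([-\tfrac d2,\tfrac d2])$ be even. Let $\tilde\lambda_1<\tilde\lambda_2$ be the first two eigenvalues and $\tilde\phi_1>0$ the first eigenfunction of $-\tilde u''+\tilde V\tilde u=\tilde\lambda\tilde u$ on $(-\tfrac d2,\tfrac d2)$, $\tilde u(\pm\tfrac d2)=0$. Set $\tilde\alpha:=-\sup_{\tau\in(-\frac d2,\frac d2)}(\log\tilde\phi_1)''(\tau)$. Then for every $s\in(0,1)$, $$\tilde\lambda_2-\tilde\lambda_1\ \ge\ 4s(1-s)\frac{\pi^2}{d^2}+2s\tilde\alpha,$$ and $$\tilde\lambda_2\ \ge\ (1+2s)\tilde\lambda_1+4s(1-s)\frac{\pi^2}{d^2}+2s\inf_{(-\frac d2,\frac d2)}\Big[\big(\tilde\phi_1'/\tilde\phi_1\big)^2-\tilde V\Big].$$ *)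

theory Defs
  imports "HOL-Analysis.Analysis"
begin

definition dirichlet_eigenfunction ::
  "(real \<Rightarrow> real) \<Rightarrow> real \<Rightarrow> real \<Rightarrow> (real \<Rightarrow> real) \<Rightarrow> bool" where
  "dirichlet_eigenfunction V d lam u \<longleftrightarrow>
     continuous_on {-d/2..d/2} u \<and> u (-d/2) = 0 \<and> u (d/2) = 0 \<and>
     (\<exists>x\<in>{-d/2<..<d/2}. u x \<noteq> 0) \<and>
     (\<forall>x\<in>{-d/2<..<d/2}. u differentiable at x \<and> deriv u differentiable at x \<and>
        - deriv (deriv u) x + V x * u x = lam * u x)"

definition dirichlet_eigenvalue :: "(real \<Rightarrow> real) \<Rightarrow> real \<Rightarrow> real \<Rightarrow> bool" where
  "dirichlet_eigenvalue V d lam \<longleftrightarrow> (\<exists>u. dirichlet_eigenfunction V d lam u)"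

definition first_dirichlet_eigenvalue :: "(real \<Rightarrow> real) \<Rightarrow> real \<Rightarrow> real \<Rightarrow> bool" where
  "first_dirichlet_eigenvalue V d lam1 \<longleftrightarrow>
     dirichlet_eigenvalue V d lam1 \<and> (\<forall>mu. dirichlet_eigenvalue V d mu \<longrightarrow> lam1 \<le> mu)"

definition second_dirichlet_eigenvalue :: "(real \<Rightarrow> real) \<Rightarrow> real \<Rightarrow> real \<Rightarrow> bool" where
  "second_dirichlet_eigenvalue V d lam2 \<longleftrightarrow>
     (\<exists>lam1. first_dirichlet_eigenvalue V d lam1 \<and> lam1 < lam2 \<and>
        dirichlet_eigenvalue V d lam2 \<and>
        (\<forall>mu. dirichlet_eigenvalue V d mu \<and> lam1 < mu \<longrightarrow> lam2 \<le> mu))"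

end

theory Submission
  imports Defs
begin

(*
  Let ph > 0 be the first Dirichlet eigenfunction (eigenvalue l1) and u a Dirichlet
  eigenfunction with eigenvalue l2 > l1.  With q = ph'/ph (which solves the Riccati equation
  q' = V - l1 - q^2), the twisted derivative psi = u' - q u, which solves
  psi' = -(l2 - l1) u - q psi, and the tangent barrier h(x) = (pi/D) tan(pi (x - c)/D),
  c the midpoint and D > R - L, consider

     G = - (l2 - l1) u psi - 2 s q psi^2 + 4 s (1 - s) h psi^2 .

  A sum-of-squares identity gives  G' >= (4 s (1 - s) (pi/D)^2 + 2 s beta - (l2 - l1)) psi^2
  whenever beta <= -q' = q^2 - V + l1.  If the claimed estimate failed, G would be
  nondecreasing; near each endpoint psi = W/ph and q psi^2 = ph' (W/ph) (W/ph^2) for the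
  Wronskian W = u' ph - ph' u, and l'Hopital's rule shows that G tends to 0 there.  Hence
  G = 0, so psi = 0, so u = 0: a contradiction.  Letting D decrease to R - L gives the bound
  with pi/(R - L).
*)

lemma continuous_on_Icc_abs_bounded:
  fixes f :: "real \<Rightarrow> real"
  assumes "continuous_on {a..b} f"
  shows "\<exists>M. \<forall>x\<in>{a..b}. \<bar>f x\<bar> \<le> M"
proof -
  have "bounded (f ` {a..b})"
    using compact_continuous_image[OF assms] by (rule compact_imp_bounded) simp
  then show ?thesis unfolding bounded_iff by auto
qed

lemma bounded_derivative_imp_bounded:
  fixes f f' :: "real \<Rightarrow> real"
  assumes "L < R" "\<And>x. x \<in> {L<..<R} \<Longrightarrow> (f has_real_derivative f' x) (at x)"
    and "\<And>x. x \<in> {L<..<R} \<Longrightarrow> \<bar>f' x\<bar> \<le> M"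
  shows "\<exists>P. \<forall>x\<in>{L<..<R}. \<bar>f x\<bar> \<le> P"
proof -
  define c where "c = (L + R) / 2"
  have c: "c \<in> {L<..<R}" using assms(1) by (simp add: c_def)
  have "\<bar>f x\<bar> \<le> \<bar>f c\<bar> + M * (R - L)" if x: "x \<in> {L<..<R}" for x
  proof -
    have "\<bar>f x - f c\<bar> \<le> M * \<bar>x - c\<bar>"
      using field_differentiable_bound[of "{L<..<R}" f f' M x c] assms(2,3) x c
      by (auto intro: has_field_derivative_at_within)
    also have "\<dots> \<le> M * (R - L)"
      using assms(3)[OF c] x c by (intro mult_left_mono) auto
    finally show ?thesis by linarith
  qed
  then show ?thesis by blast
qed

lemma bounded_log_derivative_imp_lower_bound:
  fixes E E' :: "real \<Rightarrow> real"
  assumes "L < R" "\<And>x. x \<in> {L<..<R} \<Longrightarrow> (E has_real_derivative E' x) (at x)"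
    and "\<And>x. x \<in> {L<..<R} \<Longrightarrow> E x > 0"
    and "\<And>x. x \<in> {L<..<R} \<Longrightarrow> \<bar>E' x\<bar> \<le> K * E x"
  shows "\<exists>e>0. \<forall>x\<in>{L<..<R}. e \<le> E x"
proof -
  have "\<exists>P. \<forall>x\<in>{L<..<R}. \<bar>ln (E x)\<bar> \<le> P"
  proof (rule bounded_derivative_imp_bounded[where f'="\<lambda>x. E' x / E x" and M=K])
    fix x assume x: "x \<in> {L<..<R}"
    show "((\<lambda>x. ln (E x)) has_real_derivative E' x / E x) (at x)"
      using assms(2,3)[OF x] by (auto intro!: derivative_eq_intros simp: field_simps)
    show "\<bar>E' x / E x\<bar> \<le> K"
      using assms(3,4)[OF x] by (simp add: divide_le_eq)
  qed fact
  then obtain P where P: "\<And>x. x \<in> {L<..<R} \<Longrightarrow> \<bar>ln (E x)\<bar> \<le> P" by blast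
  have "exp (- P) \<le> E x" if x: "x \<in> {L<..<R}" for x
  proof -
    have "exp (- P) \<le> exp (ln (E x))" using P[OF x] by simp
    then show ?thesis using assms(3)[OF x] by simp
  qed
  then show ?thesis by (intro exI[of _ "exp (- P)"]) auto
qed

lemma derivative_of_locally_zero:
  fixes f :: "real \<Rightarrow> real"
  assumes "(f has_real_derivative f') (at x)" "open S" "x \<in> S" "\<And>y. y \<in> S \<Longrightarrow> f y = 0"
  shows "f' = 0"
proof -
  have "((\<lambda>_. 0) has_real_derivative f') (at x)"
    by (rule has_field_derivative_transform_within_open[OF assms(1-3)]) (use assms(4) in auto)
  then show ?thesis using DERIV_const DERIV_unique by blast
qed

section \<open>Solutions of  f'' = (V - l) f\<close>

lemma solution_derivative_bounded:
  fixes V f f' :: "real \<Rightarrow> real"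
  assumes "L < R" "continuous_on {L..R} V" "continuous_on {L..R} f"
    and "\<And>x. x \<in> {L<..<R} \<Longrightarrow> (f' has_real_derivative (V x - l) * f x) (at x)"
  shows "\<exists>P. \<forall>x\<in>{L<..<R}. \<bar>f' x\<bar> \<le> P"
proof -
  obtain MV where MV: "\<And>x. x \<in> {L..R} \<Longrightarrow> \<bar>V x\<bar> \<le> MV"
    using continuous_on_Icc_abs_bounded[OF assms(2)] by blast
  obtain Mf where Mf: "\<And>x. x \<in> {L..R} \<Longrightarrow> \<bar>f x\<bar> \<le> Mf"
    using continuous_on_Icc_abs_bounded[OF assms(3)] by blast
  show ?thesis
  proof (rule bounded_derivative_imp_bounded[OF assms(1,4)])
    fix x assume "x \<in> {L<..<R}"
    then have "x \<in> {L..R}" by simp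
    then have "\<bar>V x - l\<bar> \<le> MV + \<bar>l\<bar>" "\<bar>f x\<bar> \<le> Mf" using MV[of x] Mf[of x] by auto
    then show "\<bar>(V x - l) * f x\<bar> \<le> (MV + \<bar>l\<bar>) * Mf"
      unfolding abs_mult by (intro mult_mono) auto
  qed
qed

text \<open>For a positive solution the energy f^2 + f'^2 is bounded away from zero
  (Gronwall: its logarithmic derivative is bounded).\<close>
lemma positive_solution_energy_lower_bound:
  fixes V f f' :: "real \<Rightarrow> real"
  assumes "L < R" "continuous_on {L..R} V"
    and "\<And>x. x \<in> {L<..<R} \<Longrightarrow> (f has_real_derivative f' x) (at x)"
    and "\<And>x. x \<in> {L<..<R} \<Longrightarrow> (f' has_real_derivative (V x - l) * f x) (at x)"
    and "\<And>x. x \<in> {L<..<R} \<Longrightarrow> f x > 0"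
  shows "\<exists>e>0. \<forall>x\<in>{L<..<R}. e \<le> (f x)\<^sup>2 + (f' x)\<^sup>2"
proof -
  obtain MV where MV: "\<And>x. x \<in> {L..R} \<Longrightarrow> \<bar>V x\<bar> \<le> MV"
    using continuous_on_Icc_abs_bounded[OF assms(2)] by blast
  show ?thesis
  proof (rule bounded_log_derivative_imp_lower_bound[OF assms(1), where K="1 + MV + \<bar>l\<bar>"
        and E'="\<lambda>x. 2 * f x * f' x * (1 + V x - l)"])
    fix x assume x: "x \<in> {L<..<R}"
    show "((\<lambda>x. (f x)\<^sup>2 + (f' x)\<^sup>2) has_real_derivative 2 * f x * f' x * (1 + V x - l)) (at x)"
      using assms(3,4)[OF x] by (auto intro!: derivative_eq_intros simp: algebra_simps)
    show "(f x)\<^sup>2 + (f' x)\<^sup>2 > 0" using assms(5)[OF x] by (simp add: add_pos_nonneg)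
    have "\<bar>2 * f x * f' x\<bar> \<le> (f x)\<^sup>2 + (f' x)\<^sup>2"
      using sum_squares_bound[of "\<bar>f x\<bar>" "\<bar>f' x\<bar>"] by (simp add: abs_mult)
    moreover have "\<bar>1 + V x - l\<bar> \<le> 1 + MV + \<bar>l\<bar>" using MV[of x] x by auto
    ultimately have "\<bar>2 * f x * f' x\<bar> * \<bar>1 + V x - l\<bar> \<le> ((f x)\<^sup>2 + (f' x)\<^sup>2) * (1 + MV + \<bar>l\<bar>)"
      by (intro mult_mono) auto
    then show "\<bar>2 * f x * f' x * (1 + V x - l)\<bar> \<le> (1 + MV + \<bar>l\<bar>) * ((f x)\<^sup>2 + (f' x)\<^sup>2)"
      by (simp add: abs_mult mult.commute)
  qed
qed

lemma riccati_log_derivative: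
  fixes f f' :: "real \<Rightarrow> real"
  assumes "(f has_real_derivative f' x) (at x)" "(f' has_real_derivative (v - l) * f x) (at x)"
    and "f x \<noteq> 0"
  shows "((\<lambda>y. f' y / f y) has_real_derivative v - l - (f' x / f x)\<^sup>2) (at x)"
proof -
  have "((\<lambda>y. f' y / f y) has_real_derivative ((v - l) * f x * f x - f' x * f' x) / (f x * f x)) (at x)"
    by (rule DERIV_divide[OF assms(2,1,3)])
  moreover have "((v - l) * f x * f x - f' x * f' x) / (f x * f x) = v - l - (f' x / f x)\<^sup>2"
    using assms(3) by (simp add: field_simps power2_eq_square)
  ultimately show ?thesis by simp
qed

section \<open>Behaviour of the twisted derivative at the boundary\<close>

text \<open>Two applications of l'Hopital's rule: if W and ph vanish at R, W' = k u ph with u -> 0,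
  and ph' stays away from 0, then W/ph and even W/ph^2 tend to 0.\<close>
lemma wronskian_quotients_tendsto_zero:
  fixes W ph ph' u :: "real \<Rightarrow> real" and k c R :: real
  assumes W0: "(W \<longlongrightarrow> 0) (at_left R)" and ph0: "(ph \<longlongrightarrow> 0) (at_left R)"
    and u0: "(u \<longlongrightarrow> 0) (at_left R)" and c: "c > 0"
    and near: "\<forall>\<^sub>F x in at_left R. (W has_real_derivative k * u x * ph x) (at x) \<and>
        (ph has_real_derivative ph' x) (at x) \<and> ph x \<noteq> 0 \<and> c \<le> \<bar>ph' x\<bar>"
  shows "((\<lambda>x. W x / ph x) \<longlongrightarrow> 0) (at_left R)"
    and "((\<lambda>x. W x / (ph x)\<^sup>2) \<longlongrightarrow> 0) (at_left R)"
proof -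
  have ratio1: "((\<lambda>x. k * u x * ph x / ph' x) \<longlongrightarrow> 0) (at_left R)"
  proof (rule Lim_null_comparison)
    show "\<forall>\<^sub>F x in at_left R. norm (k * u x * ph x / ph' x) \<le> \<bar>k\<bar> * \<bar>u x\<bar> * \<bar>ph x\<bar> / c"
      using near by eventually_elim (use c in \<open>auto simp: abs_mult intro!: divide_left_mono mult_pos_pos\<close>)
    show "((\<lambda>x. \<bar>k\<bar> * \<bar>u x\<bar> * \<bar>ph x\<bar> / c) \<longlongrightarrow> 0) (at_left R)"
      using c by (auto intro!: tendsto_eq_intros ph0 u0)
  qed
  have ratio2: "((\<lambda>x. k * u x * ph x / (2 * ph x * ph' x)) \<longlongrightarrow> 0) (at_left R)"
  proof (rule Lim_null_comparison)
    show "\<forall>\<^sub>F x in at_left R. norm (k * u x * ph x / (2 * ph x * ph' x)) \<le> \<bar>k\<bar> * \<bar>u x\<bar> / c"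
      using near by eventually_elim (use c in \<open>auto simp: abs_mult intro!: divide_left_mono mult_pos_pos\<close>)
    show "((\<lambda>x. \<bar>k\<bar> * \<bar>u x\<bar> / c) \<longlongrightarrow> 0) (at_left R)"
      using c by (auto intro!: tendsto_eq_intros u0)
  qed
  have ph'_nz: "\<forall>\<^sub>F x in at_left R. ph' x \<noteq> 0"
    using near by eventually_elim (use c in auto)
  show "((\<lambda>x. W x / ph x) \<longlongrightarrow> 0) (at_left R)"
    by (rule lhopital_left[OF W0 ph0 _ ph'_nz _ _ ratio1]) (use near in \<open>auto elim: eventually_mono\<close>)
  show "((\<lambda>x. W x / (ph x)\<^sup>2) \<longlongrightarrow> 0) (at_left R)"
  proof (rule lhopital_left[OF W0 _ _ _ _ _ ratio2])
    show "((\<lambda>x. (ph x)\<^sup>2) \<longlongrightarrow> 0) (at_left R)" using tendsto_power[OF ph0, of 2] by simp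
    show "\<forall>\<^sub>F x in at_left R. ((\<lambda>x. (ph x)\<^sup>2) has_real_derivative 2 * ph x * ph' x) (at x)"
      using near by eventually_elim (auto intro!: derivative_eq_intros)
  qed (use near c in \<open>auto elim: eventually_mono\<close>)
qed

lemma derivative_large_near_zero:
  fixes ph ph' :: "real \<Rightarrow> real"
  assumes ph0: "(ph \<longlongrightarrow> 0) F" and e: "e > 0" "\<forall>\<^sub>F x in F. e \<le> (ph x)\<^sup>2 + (ph' x)\<^sup>2"
  shows "\<forall>\<^sub>F x in F. sqrt (e / 2) \<le> \<bar>ph' x\<bar>"
proof -
  have "\<forall>\<^sub>F x in F. (ph x)\<^sup>2 < e / 2"
    using order_tendstoD(2)[OF tendsto_power[OF ph0, of 2], of "e / 2"] e(1) by simp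
  with e(2) show ?thesis
  proof eventually_elim
    case (elim x)
    then have "e / 2 \<le> (ph' x)\<^sup>2" by linarith
    then show ?case by (metis real_sqrt_abs real_sqrt_le_mono)
  qed
qed

lemma wronskian_boundary_limits:
  fixes V ph ph' u u' :: "real \<Rightarrow> real" and L R l1 l2 P e :: real
  assumes LR: "L < R"
    and phc: "continuous_on {L..R} ph" and uc: "continuous_on {L..R} u"
    and phR: "ph R = 0" and uR: "u R = 0"
    and dph: "\<And>x. x \<in> {L<..<R} \<Longrightarrow> (ph has_real_derivative ph' x) (at x)"
    and d2ph: "\<And>x. x \<in> {L<..<R} \<Longrightarrow> (ph' has_real_derivative (V x - l1) * ph x) (at x)"
    and du: "\<And>x. x \<in> {L<..<R} \<Longrightarrow> (u has_real_derivative u' x) (at x)"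
    and d2u: "\<And>x. x \<in> {L<..<R} \<Longrightarrow> (u' has_real_derivative (V x - l2) * u x) (at x)"
    and pos: "\<And>x. x \<in> {L<..<R} \<Longrightarrow> ph x > 0"
    and bnd: "\<And>x. x \<in> {L<..<R} \<Longrightarrow> \<bar>ph' x\<bar> \<le> P \<and> \<bar>u' x\<bar> \<le> P"
    and e: "e > 0" "\<And>x. x \<in> {L<..<R} \<Longrightarrow> e \<le> (ph x)\<^sup>2 + (ph' x)\<^sup>2"
  shows "(u \<longlongrightarrow> 0) (at_left R)"
    and "((\<lambda>x. (u' x * ph x - ph' x * u x) / ph x) \<longlongrightarrow> 0) (at_left R)"
    and "((\<lambda>x. (u' x * ph x - ph' x * u x) / (ph x)\<^sup>2) \<longlongrightarrow> 0) (at_left R)"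
proof -
  define W where "W x = u' x * ph x - ph' x * u x" for x
  have inside: "\<forall>\<^sub>F x in at_left R. x \<in> {L<..<R}"
    using LR by (auto simp: eventually_at_left_field)
  have ph0: "(ph \<longlongrightarrow> 0) (at_left R)" and u0: "(u \<longlongrightarrow> 0) (at_left R)"
    using phc uc phR uR LR
    by (auto simp: continuous_on_def at_within_Icc_at_left dest!: bspec[of _ _ R])
  show "(u \<longlongrightarrow> 0) (at_left R)" by (rule u0)
  have dW: "(W has_real_derivative (l1 - l2) * u x * ph x) (at x)" if "x \<in> {L<..<R}" for x
    unfolding W_def
    by (rule derivative_eq_intros dph du d2ph d2u that refl)+ (simp add: algebra_simps)
  have "\<forall>\<^sub>F x in at_left R. sqrt (e / 2) \<le> \<bar>ph' x\<bar>"
    using inside e by (intro derivative_large_near_zero[OF ph0]) (auto elim: eventually_mono)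
  with inside have near: "\<forall>\<^sub>F x in at_left R. (W has_real_derivative (l1 - l2) * u x * ph x) (at x) \<and>
        (ph has_real_derivative ph' x) (at x) \<and> ph x \<noteq> 0 \<and> sqrt (e / 2) \<le> \<bar>ph' x\<bar>"
    by eventually_elim (use dW dph pos in fastforce)
  \<comment> \<open>W is a sum of bounded functions times functions tending to 0.\<close>
  have W0: "(W \<longlongrightarrow> 0) (at_left R)"
  proof (rule Lim_null_comparison)
    show "\<forall>\<^sub>F x in at_left R. norm (W x) \<le> P * \<bar>ph x\<bar> + P * \<bar>u x\<bar>"
      using inside
    proof eventually_elim
      case (elim x)
      have "\<bar>W x\<bar> \<le> \<bar>u' x\<bar> * \<bar>ph x\<bar> + \<bar>ph' x\<bar> * \<bar>u x\<bar>"
        unfolding W_def by (metis abs_mult abs_triangle_ineq4)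
      also have "\<dots> \<le> P * \<bar>ph x\<bar> + P * \<bar>u x\<bar>"
        using bnd[OF elim] by (intro add_mono mult_right_mono) auto
      finally show ?case by simp
    qed
    show "((\<lambda>x. P * \<bar>ph x\<bar> + P * \<bar>u x\<bar>) \<longlongrightarrow> 0) (at_left R)"
      by (auto intro!: tendsto_eq_intros ph0 u0)
  qed
  show "((\<lambda>x. (u' x * ph x - ph' x * u x) / ph x) \<longlongrightarrow> 0) (at_left R)"
    and "((\<lambda>x. (u' x * ph x - ph' x * u x) / (ph x)\<^sup>2) \<longlongrightarrow> 0) (at_left R)"
    using wronskian_quotients_tendsto_zero[OF W0 ph0 u0 _ near] e(1) unfolding W_def by simp_all
qed

definition twisted_derivative ::
  "(real \<Rightarrow> real) \<Rightarrow> (real \<Rightarrow> real) \<Rightarrow> (real \<Rightarrow> real) \<Rightarrow> real \<Rightarrow> real" where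
  "twisted_derivative q u u' x = u' x - q x * u x"

text \<open>Boundary behaviour at the right endpoint R: if ph > 0 and u are solutions vanishing at R,
  then u, the twisted derivative psi = W/ph and q psi^2 = ph' (W/ph) (W/ph^2), with
  q = ph'/ph, all tend to 0.\<close>
lemma boundary_limits_right:
  fixes V ph ph' u u' :: "real \<Rightarrow> real" and L R l1 l2 P e :: real
  defines "q \<equiv> \<lambda>x. ph' x / ph x"
  assumes LR: "L < R"
    and phc: "continuous_on {L..R} ph" and uc: "continuous_on {L..R} u"
    and phR: "ph R = 0" and uR: "u R = 0"
    and dph: "\<And>x. x \<in> {L<..<R} \<Longrightarrow> (ph has_real_derivative ph' x) (at x)"
    and d2ph: "\<And>x. x \<in> {L<..<R} \<Longrightarrow> (ph' has_real_derivative (V x - l1) * ph x) (at x)"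
    and du: "\<And>x. x \<in> {L<..<R} \<Longrightarrow> (u has_real_derivative u' x) (at x)"
    and d2u: "\<And>x. x \<in> {L<..<R} \<Longrightarrow> (u' has_real_derivative (V x - l2) * u x) (at x)"
    and pos: "\<And>x. x \<in> {L<..<R} \<Longrightarrow> ph x > 0"
    and bnd: "\<And>x. x \<in> {L<..<R} \<Longrightarrow> \<bar>ph' x\<bar> \<le> P \<and> \<bar>u' x\<bar> \<le> P"
    and e: "e > 0" "\<And>x. x \<in> {L<..<R} \<Longrightarrow> e \<le> (ph x)\<^sup>2 + (ph' x)\<^sup>2"
  shows "(u \<longlongrightarrow> 0) (at_left R)"
    and "(twisted_derivative q u u' \<longlongrightarrow> 0) (at_left R)"
    and "((\<lambda>x. q x * (twisted_derivative q u u' x)\<^sup>2) \<longlongrightarrow> 0) (at_left R)"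
proof -
  define W where "W x = u' x * ph x - ph' x * u x" for x
  have W: "(u \<longlongrightarrow> 0) (at_left R)" "((\<lambda>x. W x / ph x) \<longlongrightarrow> 0) (at_left R)"
    "((\<lambda>x. W x / (ph x)\<^sup>2) \<longlongrightarrow> 0) (at_left R)"
    using wronskian_boundary_limits[OF LR phc uc phR uR dph d2ph du d2u pos bnd e]
    unfolding W_def by auto
  show "(u \<longlongrightarrow> 0) (at_left R)" by (rule W(1))
  have inside: "\<forall>\<^sub>F x in at_left R. x \<in> {L<..<R}"
    using LR by (auto simp: eventually_at_left_field)
  have "\<forall>\<^sub>F x in at_left R. twisted_derivative q u u' x = W x / ph x"
    using inside by eventually_elim (use pos in \<open>force simp: twisted_derivative_def q_def W_def field_simps\<close>)
  then show "(twisted_derivative q u u' \<longlongrightarrow> 0) (at_left R)"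
    using W(2) tendsto_cong by fastforce
  have "\<forall>\<^sub>F x in at_left R. q x * (twisted_derivative q u u' x)\<^sup>2 = ph' x * (W x / ph x) * (W x / (ph x)\<^sup>2)"
    using inside
    by eventually_elim (use pos in \<open>force simp: twisted_derivative_def q_def W_def field_simps power2_eq_square\<close>)
  moreover have "((\<lambda>x. ph' x * (W x / ph x) * (W x / (ph x)\<^sup>2)) \<longlongrightarrow> 0) (at_left R)"
  proof (rule Lim_null_comparison)
    show "\<forall>\<^sub>F x in at_left R.
        norm (ph' x * (W x / ph x) * (W x / (ph x)\<^sup>2)) \<le> P * \<bar>W x / ph x\<bar> * \<bar>W x / (ph x)\<^sup>2\<bar>"
      using inside
    proof eventually_elim
      case (elim x)
      then have "\<bar>ph' x\<bar> \<le> P" using bnd by blast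
      then show ?case unfolding real_norm_def abs_mult by (intro mult_right_mono) auto
    qed
    show "((\<lambda>x. P * \<bar>W x / ph x\<bar> * \<bar>W x / (ph x)\<^sup>2\<bar>) \<longlongrightarrow> 0) (at_left R)"
      using tendsto_mult[OF tendsto_mult[OF tendsto_const[of P] tendsto_rabs[OF W(2)]]
          tendsto_rabs[OF W(3)]]
      by simp
  qed
  ultimately show "((\<lambda>x. q x * (twisted_derivative q u u' x)\<^sup>2) \<longlongrightarrow> 0) (at_left R)"
    using tendsto_cong by fastforce
qed

text \<open>The same at the left endpoint, obtained by reflecting x to -x.\<close>
lemma boundary_limits_left:
  fixes V ph ph' u u' :: "real \<Rightarrow> real" and L R l1 l2 P e :: real
  defines "q \<equiv> \<lambda>x. ph' x / ph x"
  assumes LR: "L < R"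
    and phc: "continuous_on {L..R} ph" and uc: "continuous_on {L..R} u"
    and phL: "ph L = 0" and uL: "u L = 0"
    and dph: "\<And>x. x \<in> {L<..<R} \<Longrightarrow> (ph has_real_derivative ph' x) (at x)"
    and d2ph: "\<And>x. x \<in> {L<..<R} \<Longrightarrow> (ph' has_real_derivative (V x - l1) * ph x) (at x)"
    and du: "\<And>x. x \<in> {L<..<R} \<Longrightarrow> (u has_real_derivative u' x) (at x)"
    and d2u: "\<And>x. x \<in> {L<..<R} \<Longrightarrow> (u' has_real_derivative (V x - l2) * u x) (at x)"
    and pos: "\<And>x. x \<in> {L<..<R} \<Longrightarrow> ph x > 0"
    and bnd: "\<And>x. x \<in> {L<..<R} \<Longrightarrow> \<bar>ph' x\<bar> \<le> P \<and> \<bar>u' x\<bar> \<le> P"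
    and e: "e > 0" "\<And>x. x \<in> {L<..<R} \<Longrightarrow> e \<le> (ph x)\<^sup>2 + (ph' x)\<^sup>2"
  shows "(u \<longlongrightarrow> 0) (at_right L)"
    and "(twisted_derivative q u u' \<longlongrightarrow> 0) (at_right L)"
    and "((\<lambda>x. q x * (twisted_derivative q u u' x)\<^sup>2) \<longlongrightarrow> 0) (at_right L)"
proof -
  have mem: "- y \<in> {L<..<R}" if "y \<in> {-R<..<-L}" for y using that by auto
  have mirror_cont: "continuous_on {-R..-L} (\<lambda>y. f (- y))" if "continuous_on {L..R} f" for f :: "real \<Rightarrow> real"
    by (rule continuous_on_compose2[OF that]) (auto intro: continuous_on_minus continuous_on_id)
  have mirror_deriv: "((\<lambda>y. f (- y)) has_real_derivative - D) (at y)"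
    if "(f has_real_derivative D) (at (- y))" for f D y
    using that DERIV_mirror by blast
  note mirrored = boundary_limits_right[where V="\<lambda>y. V (- y)" and ph="\<lambda>y. ph (- y)" and ph'="\<lambda>y. - ph' (- y)"
      and u="\<lambda>y. u (- y)" and u'="\<lambda>y. - u' (- y)" and L="- R" and R="- L" and ?l1.0=l1 and ?l2.0=l2 and P=P and e=e]
  have hyps: "- R < - L" "continuous_on {-R..-L} (\<lambda>y. ph (- y))" "continuous_on {-R..-L} (\<lambda>y. u (- y))"
    "ph (- (- L)) = 0" "u (- (- L)) = 0"
    using LR phL uL by (auto intro: mirror_cont phc uc)
  have interior:
    "((\<lambda>y. ph (- y)) has_real_derivative - ph' (- y)) (at y)"
    "((\<lambda>y. - ph' (- y)) has_real_derivative (V (- y) - l1) * ph (- y)) (at y)"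
    "((\<lambda>y. u (- y)) has_real_derivative - u' (- y)) (at y)"
    "((\<lambda>y. - u' (- y)) has_real_derivative (V (- y) - l2) * u (- y)) (at y)"
    "ph (- y) > 0" "\<bar>- ph' (- y)\<bar> \<le> P \<and> \<bar>- u' (- y)\<bar> \<le> P"
    "e \<le> (ph (- y))\<^sup>2 + (- ph' (- y))\<^sup>2"
    if "y \<in> {-R<..<-L}" for y
    using mirror_deriv[OF dph[OF mem[OF that]]] mirror_deriv[OF du[OF mem[OF that]]]
      DERIV_minus[OF mirror_deriv[OF d2ph[OF mem[OF that]]]] DERIV_minus[OF mirror_deriv[OF d2u[OF mem[OF that]]]]
      pos[OF mem[OF that]] bnd[OF mem[OF that]] e(2)[OF mem[OF that]]
    by auto
  note lim = mirrored[OF hyps interior(1-6) e(1) interior(7)]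
  show "(u \<longlongrightarrow> 0) (at_right L)"
    using lim(1) unfolding filterlim_at_left_to_right by simp
  show "(twisted_derivative q u u' \<longlongrightarrow> 0) (at_right L)"
    using tendsto_minus[OF lim(2)]
    unfolding filterlim_at_left_to_right twisted_derivative_def q_def by simp
  show "((\<lambda>x. q x * (twisted_derivative q u u' x)\<^sup>2) \<longlongrightarrow> 0) (at_right L)"
    using tendsto_minus[OF lim(3)]
    unfolding filterlim_at_left_to_right twisted_derivative_def q_def by (simp add: power2_commute)
qed

section \<open>The barrier functional\<close>

lemma tan_barrier_has_derivative:
  fixes D c x :: real
  assumes D: "D > 0" and x: "\<bar>x - c\<bar> < D / 2"
  shows "((\<lambda>y. pi / D * tan (pi * (y - c) / D)) has_real_derivative
           (pi / D)\<^sup>2 + (pi / D * tan (pi * (x - c) / D))\<^sup>2) (at x)"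
proof -
  have "\<bar>pi * (x - c) / D\<bar> = pi * \<bar>x - c\<bar> / D" using D by (simp add: abs_mult)
  also have "\<dots> < pi * (D / 2) / D"
    using x D by (intro divide_strict_right_mono mult_strict_left_mono) auto
  finally have "\<bar>pi * (x - c) / D\<bar> < pi / 2" using D by simp
  then have cos_pos: "cos (pi * (x - c) / D) > 0" by (intro cos_gt_zero_pi) linarith+
  then have "((\<lambda>y. pi / D * tan (pi * (y - c) / D)) has_real_derivative
      pi / D * (inverse ((cos (pi * (x - c) / D))\<^sup>2) * (pi / D))) (at x)"
    using D by (auto intro!: derivative_eq_intros DERIV_tan)
  moreover have "inverse ((cos (pi * (x - c) / D))\<^sup>2) = 1 + (tan (pi * (x - c) / D))\<^sup>2"
    using tan_sec[of "pi * (x - c) / D"] cos_pos by (simp add: power_inverse)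
  moreover have "pi / D * ((1 + t\<^sup>2) * (pi / D)) = (pi / D)\<^sup>2 + (pi / D * t)\<^sup>2" for t :: real
    by (simp add: power2_eq_square algebra_simps)
  ultimately show ?thesis by metis
qed

text \<open>Writing u' = psi + q u, psi' = -Gamma u - q psi and
  h' = K + h^2, the derivative of  G = -Gamma u psi - 2 s q psi^2 + 4 s (1 - s) h psi^2
  exceeds (4 s (1 - s) K + 2 s beta - Gamma) psi^2 by a sum of squares, provided beta <= -q'.\<close>
lemma barrier_derivative_lower_bound:
  fixes s \<Gamma> u u' q q' psi psi' h h' K \<beta> :: real
  assumes u': "u' = psi + q * u" and psi': "psi' = - \<Gamma> * u - q * psi" and h': "h' = K + h\<^sup>2"
    and beta: "\<beta> \<le> - q'" and s: "0 \<le> s" "s \<le> 1"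
  shows "(4 * s * (1 - s) * K + 2 * s * \<beta> - \<Gamma>) * psi\<^sup>2
    \<le> - \<Gamma> * (u' * psi + u * psi') - 2 * s * (q' * psi\<^sup>2 + q * (2 * psi * psi'))
      + 4 * s * (1 - s) * (h' * psi\<^sup>2 + h * (2 * psi * psi'))"
proof -
  have "- \<Gamma> * (u' * psi + u * psi') - 2 * s * (q' * psi\<^sup>2 + q * (2 * psi * psi'))
      + 4 * s * (1 - s) * (h' * psi\<^sup>2 + h * (2 * psi * psi'))
      - (4 * s * (1 - s) * K + 2 * s * \<beta> - \<Gamma>) * psi\<^sup>2
    = ((1 - 2 * s) * psi' + q * psi)\<^sup>2 + 4 * s * (1 - s) * (psi' + h * psi)\<^sup>2
      + 2 * s * (- q' - \<beta>) * psi\<^sup>2"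
    unfolding u' psi' h' by algebra
  moreover have "0 \<le> ((1 - 2 * s) * psi' + q * psi)\<^sup>2 + 4 * s * (1 - s) * (psi' + h * psi)\<^sup>2
      + 2 * s * (- q' - \<beta>) * psi\<^sup>2"
    using beta s by (intro add_nonneg_nonneg mult_nonneg_nonneg) auto
  ultimately show ?thesis by linarith
qed

definition barrier ::
  "real \<Rightarrow> real \<Rightarrow> (real \<Rightarrow> real) \<Rightarrow> (real \<Rightarrow> real) \<Rightarrow> (real \<Rightarrow> real) \<Rightarrow> (real \<Rightarrow> real) \<Rightarrow> real \<Rightarrow> real"
  where "barrier \<Gamma> s q h u u' x =
    - \<Gamma> * (u x * twisted_derivative q u u' x) - 2 * s * (q x * (twisted_derivative q u u' x)\<^sup>2)
    + 4 * s * (1 - s) * (h x * (twisted_derivative q u u' x)\<^sup>2)"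

lemma twisted_derivative_has_derivative:
  fixes q u u' :: "real \<Rightarrow> real"
  assumes du: "(u has_real_derivative u' x) (at x)"
    and d2u: "(u' has_real_derivative (v - l2) * u x) (at x)"
    and dq: "(q has_real_derivative v - l1 - (q x)\<^sup>2) (at x)"
  shows "(twisted_derivative q u u' has_real_derivative
           - (l2 - l1) * u x - q x * twisted_derivative q u u' x) (at x)"
  unfolding twisted_derivative_def[abs_def]
  by (rule DERIV_cong[OF DERIV_diff[OF d2u DERIV_mult[OF dq du]]])
     (simp add: algebra_simps power2_eq_square)

lemma barrier_derivative_bound:
  fixes q h u u' :: "real \<Rightarrow> real"
  assumes du: "(u has_real_derivative u' x) (at x)"
    and d2u: "(u' has_real_derivative (v - l2) * u x) (at x)"
    and dq: "(q has_real_derivative v - l1 - (q x)\<^sup>2) (at x)"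
    and dh: "(h has_real_derivative K + (h x)\<^sup>2) (at x)"
    and beta: "\<beta> \<le> (q x)\<^sup>2 - v + l1" and s: "0 \<le> s" "s \<le> 1"
  shows "\<exists>G'. (barrier (l2 - l1) s q h u u' has_real_derivative G') (at x) \<and>
    (4 * s * (1 - s) * K + 2 * s * \<beta> - (l2 - l1)) * (twisted_derivative q u u' x)\<^sup>2 \<le> G'"
proof -
  let ?\<Gamma> = "l2 - l1" and ?psi = "twisted_derivative q u u'"
  let ?psi' = "- ?\<Gamma> * u x - q x * ?psi x"
  have dpsi: "(?psi has_real_derivative ?psi') (at x)"
    by (rule twisted_derivative_has_derivative[OF du d2u dq])
  have "(barrier ?\<Gamma> s q h u u' has_real_derivative
      - ?\<Gamma> * (u' x * ?psi x + u x * ?psi') - 2 * s * ((v - l1 - (q x)\<^sup>2) * (?psi x)\<^sup>2 + q x * (2 * ?psi x * ?psi'))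
      + 4 * s * (1 - s) * ((K + (h x)\<^sup>2) * (?psi x)\<^sup>2 + h x * (2 * ?psi x * ?psi'))) (at x)"
    unfolding barrier_def[abs_def]
    by (rule derivative_eq_intros du dpsi dq dh refl)+ (simp add: algebra_simps)
  moreover have "(4 * s * (1 - s) * K + 2 * s * \<beta> - ?\<Gamma>) * (?psi x)\<^sup>2
      \<le> - ?\<Gamma> * (u' x * ?psi x + u x * ?psi') - 2 * s * ((v - l1 - (q x)\<^sup>2) * (?psi x)\<^sup>2 + q x * (2 * ?psi x * ?psi'))
      + 4 * s * (1 - s) * ((K + (h x)\<^sup>2) * (?psi x)\<^sup>2 + h x * (2 * ?psi x * ?psi'))"
    using beta s by (intro barrier_derivative_lower_bound) (auto simp: twisted_derivative_def)
  ultimately show ?thesis by blast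
qed

lemma barrier_tendsto_zero:
  fixes q h u u' :: "real \<Rightarrow> real"
  assumes "(u \<longlongrightarrow> 0) F" "(twisted_derivative q u u' \<longlongrightarrow> 0) F"
    and "((\<lambda>x. q x * (twisted_derivative q u u' x)\<^sup>2) \<longlongrightarrow> 0) F" "(h \<longlongrightarrow> hl) F"
  shows "(barrier \<Gamma> s q h u u' \<longlongrightarrow> 0) F"
proof -
  have "(barrier \<Gamma> s q h u u' \<longlongrightarrow> - \<Gamma> * (0 * 0) - 2 * s * 0 + 4 * s * (1 - s) * (hl * 0\<^sup>2)) F"
    unfolding barrier_def[abs_def] by (intro tendsto_intros assms)
  then show ?thesis by simp
qed

lemma nondecreasing_vanishing_at_ends:
  fixes G :: "real \<Rightarrow> real"
  assumes mono: "\<And>x y. x \<in> {L<..<R} \<Longrightarrow> y \<in> {L<..<R} \<Longrightarrow> x \<le> y \<Longrightarrow> G x \<le> G y"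
    and left: "(G \<longlongrightarrow> 0) (at_right L)" and right: "(G \<longlongrightarrow> 0) (at_left R)"
    and x: "x \<in> {L<..<R}"
  shows "G x = 0"
proof (rule antisym)
  have "\<forall>\<^sub>F y in at_left R. G x \<le> G y"
    using x by (auto simp: eventually_at_left_field intro!: exI[of _ x] mono)
  then show "G x \<le> 0" using right x by (auto intro: tendsto_lowerbound)
  have "\<forall>\<^sub>F y in at_right L. G y \<le> G x"
    using x by (auto simp: eventually_at_right_field intro!: exI[of _ x] mono)
  then show "0 \<le> G x" using left x by (auto intro: tendsto_upperbound)
qed

lemma barrier_boundary_limits:
  fixes V ph ph' u u' h :: "real \<Rightarrow> real" and L R l1 l2 \<Gamma> s :: real
  defines "q \<equiv> \<lambda>x. ph' x / ph x"
  assumes LR: "L < R" and Vc: "continuous_on {L..R} V"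
    and phc: "continuous_on {L..R} ph" and uc: "continuous_on {L..R} u"
    and phL: "ph L = 0" and uL: "u L = 0" and phR: "ph R = 0" and uR: "u R = 0"
    and dph: "\<And>x. x \<in> {L<..<R} \<Longrightarrow> (ph has_real_derivative ph' x) (at x)"
    and d2ph: "\<And>x. x \<in> {L<..<R} \<Longrightarrow> (ph' has_real_derivative (V x - l1) * ph x) (at x)"
    and du: "\<And>x. x \<in> {L<..<R} \<Longrightarrow> (u has_real_derivative u' x) (at x)"
    and d2u: "\<And>x. x \<in> {L<..<R} \<Longrightarrow> (u' has_real_derivative (V x - l2) * u x) (at x)"
    and pos: "\<And>x. x \<in> {L<..<R} \<Longrightarrow> ph x > 0"
    and hL: "isCont h L" and hR: "isCont h R"
  shows "(barrier \<Gamma> s q h u u' \<longlongrightarrow> 0) (at_right L)"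
    and "(barrier \<Gamma> s q h u u' \<longlongrightarrow> 0) (at_left R)"
proof -
  obtain P1 where P1: "\<And>x. x \<in> {L<..<R} \<Longrightarrow> \<bar>ph' x\<bar> \<le> P1"
    using solution_derivative_bounded[OF LR Vc phc d2ph] by blast
  obtain P2 where P2: "\<And>x. x \<in> {L<..<R} \<Longrightarrow> \<bar>u' x\<bar> \<le> P2"
    using solution_derivative_bounded[OF LR Vc uc d2u] by blast
  have bnd: "\<bar>ph' x\<bar> \<le> max P1 P2 \<and> \<bar>u' x\<bar> \<le> max P1 P2" if "x \<in> {L<..<R}" for x
    using P1[OF that] P2[OF that] by linarith
  obtain e where e: "e > 0" "\<And>x. x \<in> {L<..<R} \<Longrightarrow> e \<le> (ph x)\<^sup>2 + (ph' x)\<^sup>2"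
    using positive_solution_energy_lower_bound[OF LR Vc dph d2ph pos] by blast
  have h_lim: "(h \<longlongrightarrow> h a) (at a within S)" if "isCont h a" for a S
    using that by (simp add: isCont_def tendsto_within_subset[of _ _ _ UNIV])
  show "(barrier \<Gamma> s q h u u' \<longlongrightarrow> 0) (at_right L)"
    using boundary_limits_left[OF LR phc uc phL uL dph d2ph du d2u pos bnd e] h_lim[OF hL]
    unfolding q_def by (intro barrier_tendsto_zero) auto
  show "(barrier \<Gamma> s q h u u' \<longlongrightarrow> 0) (at_left R)"
    using boundary_limits_right[OF LR phc uc phR uR dph d2ph du d2u pos bnd e] h_lim[OF hR]
    unfolding q_def by (intro barrier_tendsto_zero) auto
qed

section \<open>The gap estimate on an interval\<close>

text \<open>Hypotheses: ph > 0 and u are classical Dirichlet eigenfunctions on (L, R) for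
  l1 < l2, and beta bounds -(log ph)'' = (ph'/ph)^2 - V + l1 from below.\<close>
lemma gap_estimate_strict:
  fixes V ph ph' u u' :: "real \<Rightarrow> real" and L R l1 l2 s \<beta> D :: real
  assumes LR: "L < R" and Vc: "continuous_on {L..R} V"
    and phc: "continuous_on {L..R} ph" and uc: "continuous_on {L..R} u"
    and phL: "ph L = 0" and uL: "u L = 0" and phR: "ph R = 0" and uR: "u R = 0"
    and dph: "\<And>x. x \<in> {L<..<R} \<Longrightarrow> (ph has_real_derivative ph' x) (at x)"
    and d2ph: "\<And>x. x \<in> {L<..<R} \<Longrightarrow> (ph' has_real_derivative (V x - l1) * ph x) (at x)"
    and du: "\<And>x. x \<in> {L<..<R} \<Longrightarrow> (u has_real_derivative u' x) (at x)"
    and d2u: "\<And>x. x \<in> {L<..<R} \<Longrightarrow> (u' has_real_derivative (V x - l2) * u x) (at x)"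
    and pos: "\<And>x. x \<in> {L<..<R} \<Longrightarrow> ph x > 0"
    and u_nonzero: "\<exists>x\<in>{L<..<R}. u x \<noteq> 0"
    and gap: "l1 < l2"
    and beta: "\<And>x. x \<in> {L<..<R} \<Longrightarrow> \<beta> \<le> (ph' x / ph x)\<^sup>2 - V x + l1"
    and s: "0 < s" "s < 1"
    and D: "R - L < D"
  shows "4 * s * (1 - s) * (pi / D)\<^sup>2 + 2 * s * \<beta> \<le> l2 - l1"
proof (rule ccontr)
  define I where "I = {L<..<R}"
  define \<epsilon> where "\<epsilon> = 4 * s * (1 - s) * (pi / D)\<^sup>2 + 2 * s * \<beta> - (l2 - l1)"
  assume "\<not> ?thesis"
  then have \<epsilon>: "\<epsilon> > 0" unfolding \<epsilon>_def by simp
  define q where "q = (\<lambda>x. ph' x / ph x)"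
  define h where "h x = pi / D * tan (pi * (x - (L + R) / 2) / D)" for x
  define G where "G = barrier (l2 - l1) s q h u u'"
  let ?psi = "twisted_derivative q u u'"
  have dh: "(h has_real_derivative (pi / D)\<^sup>2 + (h x)\<^sup>2) (at x)" if "x \<in> {L..R}" for x
    unfolding h_def using that D
    by (intro tan_barrier_has_derivative) (auto simp: abs_if field_simps)
  have dq: "(q has_real_derivative V x - l1 - (q x)\<^sup>2) (at x)" if "x \<in> I" for x
    using that pos[of x] unfolding q_def I_def
    by (intro riccati_log_derivative dph d2ph) auto
  have dpsi: "(?psi has_real_derivative - (l2 - l1) * u x - q x * ?psi x) (at x)" if "x \<in> I" for x
    using twisted_derivative_has_derivative[OF du d2u dq[OF that]] that unfolding I_def by blast
  have dG: "\<exists>G'. (G has_real_derivative G') (at x) \<and> \<epsilon> * (?psi x)\<^sup>2 \<le> G'" if "x \<in> I" for x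
    unfolding G_def \<epsilon>_def
  proof (rule barrier_derivative_bound[OF _ _ dq[OF that] dh])
    show "\<beta> \<le> (q x)\<^sup>2 - V x + l1" using beta that unfolding I_def q_def by blast
  qed (use du d2u s that in \<open>auto simp: I_def\<close>)
  \<comment> \<open>If the estimate failed, G would be nondecreasing and vanish at both endpoints.\<close>
  have mono: "G x \<le> G y" if "x \<in> I" "y \<in> I" "x \<le> y" for x y
  proof (rule DERIV_nonneg_imp_increasing_open[OF \<open>x \<le> y\<close>])
    fix t assume "x < t" "t < y"
    then have "t \<in> I" using that unfolding I_def by auto
    moreover have "0 \<le> \<epsilon> * (?psi t)\<^sup>2" using \<epsilon> by simp
    ultimately show "\<exists>y. (G has_real_derivative y) (at t) \<and> 0 \<le> y"
      using dG by (meson order_trans)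
  next
    have "isCont G t" if "t \<in> {x..y}" for t
      using dG[of t] that \<open>x \<in> I\<close> \<open>y \<in> I\<close> unfolding I_def by (auto intro: DERIV_isCont)
    then show "continuous_on {x..y} G" by (simp add: continuous_at_imp_continuous_on)
  qed
  have "(G \<longlongrightarrow> 0) (at_left R)" "(G \<longlongrightarrow> 0) (at_right L)"
    using barrier_boundary_limits[OF LR Vc phc uc phL uL phR uR dph d2ph du d2u pos]
      DERIV_isCont[OF dh] LR unfolding G_def q_def by auto
  then have G_zero: "G x = 0" if "x \<in> I" for x
    using nondecreasing_vanishing_at_ends[of L R G] mono that unfolding I_def by blast
  \<comment> \<open>Hence G' = 0, so psi = 0, so psi' = -(l2 - l1) u = 0.\<close>
  have I_open: "open I" unfolding I_def by simp
  have psi_zero: "?psi x = 0" if x: "x \<in> I" for x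
  proof -
    obtain G' where G': "(G has_real_derivative G') (at x)" "\<epsilon> * (?psi x)\<^sup>2 \<le> G'"
      using dG[OF x] by blast
    have "G' = 0" by (rule derivative_of_locally_zero[OF G'(1) I_open x G_zero])
    then show ?thesis using G'(2) \<epsilon> by (simp add: mult_le_0_iff)
  qed
  have "u x = 0" if x: "x \<in> I" for x
  proof -
    have "- (l2 - l1) * u x - q x * ?psi x = 0"
      by (rule derivative_of_locally_zero[OF dpsi[OF x] I_open x psi_zero])
    then show ?thesis using psi_zero[OF x] gap by simp
  qed
  then show False using u_nonzero unfolding I_def by blast
qed

text \<open>Letting the barrier period D decrease to R - L.\<close>
lemma gap_estimate:
  fixes V ph ph' u u' :: "real \<Rightarrow> real" and L R l1 l2 s \<beta> :: real
  assumes LR: "L < R" and Vc: "continuous_on {L..R} V"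
    and phc: "continuous_on {L..R} ph" and uc: "continuous_on {L..R} u"
    and phL: "ph L = 0" and uL: "u L = 0" and phR: "ph R = 0" and uR: "u R = 0"
    and dph: "\<And>x. x \<in> {L<..<R} \<Longrightarrow> (ph has_real_derivative ph' x) (at x)"
    and d2ph: "\<And>x. x \<in> {L<..<R} \<Longrightarrow> (ph' has_real_derivative (V x - l1) * ph x) (at x)"
    and du: "\<And>x. x \<in> {L<..<R} \<Longrightarrow> (u has_real_derivative u' x) (at x)"
    and d2u: "\<And>x. x \<in> {L<..<R} \<Longrightarrow> (u' has_real_derivative (V x - l2) * u x) (at x)"
    and pos: "\<And>x. x \<in> {L<..<R} \<Longrightarrow> ph x > 0"
    and u_nonzero: "\<exists>x\<in>{L<..<R}. u x \<noteq> 0"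
    and gap: "l1 < l2"
    and beta: "\<And>x. x \<in> {L<..<R} \<Longrightarrow> \<beta> \<le> (ph' x / ph x)\<^sup>2 - V x + l1"
    and s: "0 < s" "s < 1"
  shows "4 * s * (1 - s) * pi\<^sup>2 / (R - L)\<^sup>2 + 2 * s * \<beta> \<le> l2 - l1"
proof (rule tendsto_upperbound)
  show "((\<lambda>D. 4 * s * (1 - s) * (pi / D)\<^sup>2 + 2 * s * \<beta>) \<longlongrightarrow>
      4 * s * (1 - s) * pi\<^sup>2 / (R - L)\<^sup>2 + 2 * s * \<beta>) (at_right (R - L))"
    using LR by (auto intro!: tendsto_eq_intros simp: power_divide)
  show "\<forall>\<^sub>F D in at_right (R - L). 4 * s * (1 - s) * (pi / D)\<^sup>2 + 2 * s * \<beta> \<le> l2 - l1"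
    using gap_estimate_strict[OF assms] by (auto simp: eventually_at_right_field intro!: exI[of _ "R - L + 1"])
qed simp

section \<open>Dirichlet eigenvalues on (-d/2, d/2)\<close>

lemma dirichlet_eigenfunction_ode:
  assumes "dirichlet_eigenfunction V d lam f" and x: "x \<in> {-d/2<..<d/2}"
  shows "(f has_real_derivative deriv f x) (at x)"
    and "(deriv f has_real_derivative (V x - lam) * f x) (at x)"
proof -
  have "f differentiable at x" "deriv f differentiable at x"
    and eq: "- deriv (deriv f) x + V x * f x = lam * f x"
    using assms unfolding dirichlet_eigenfunction_def by auto
  then have "(f has_real_derivative deriv f x) (at x)"
    and "(deriv f has_real_derivative deriv (deriv f) x) (at x)"
    by (simp_all add: DERIV_deriv_iff_real_differentiable)
  moreover have "deriv (deriv f) x = (V x - lam) * f x" using eq by (simp add: algebra_simps)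
  ultimately show "(f has_real_derivative deriv f x) (at x)"
    and "(deriv f has_real_derivative (V x - lam) * f x) (at x)" by simp_all
qed

lemma first_less_second:
  assumes "first_dirichlet_eigenvalue V d lam1" "second_dirichlet_eigenvalue V d lam2"
  shows "lam1 < lam2" and "dirichlet_eigenvalue V d lam2"
proof -
  obtain lam1' where "first_dirichlet_eigenvalue V d lam1'" "lam1' < lam2"
      "dirichlet_eigenvalue V d lam2"
    using assms(2) unfolding second_dirichlet_eigenvalue_def by blast
  moreover have "lam1 = lam1'"
    using assms(1) \<open>first_dirichlet_eigenvalue V d lam1'\<close>
    unfolding first_dirichlet_eigenvalue_def by (meson order_antisym)
  ultimately show "lam1 < lam2" and "dirichlet_eigenvalue V d lam2" by simp_all
qed

lemma dirichlet_gap_estimate: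
  assumes d: "d > 0" and Vc: "continuous_on {-d/2..d/2} V"
    and ph: "dirichlet_eigenfunction V d l1 ph" and pos: "\<forall>x\<in>{-d/2<..<d/2}. ph x > 0"
    and u: "dirichlet_eigenfunction V d l2 u" and gap: "l1 < l2"
    and beta: "\<And>x. x \<in> {-d/2<..<d/2} \<Longrightarrow> \<beta> \<le> (deriv ph x / ph x)\<^sup>2 - V x + l1"
    and s: "0 < s" "s < 1"
  shows "4 * s * (1 - s) * pi\<^sup>2 / d\<^sup>2 + 2 * s * \<beta> \<le> l2 - l1"
  using gap_estimate[of "-d/2" "d/2" V ph u "deriv ph" l1 "deriv u" l2 \<beta> s] assms
    dirichlet_eigenfunction_ode[OF ph] dirichlet_eigenfunction_ode[OF u]
  unfolding dirichlet_eigenfunction_def by auto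

lemma log_eigenfunction_second_derivative:
  assumes ph: "dirichlet_eigenfunction V d lam ph" and pos: "\<forall>x\<in>{-d/2<..<d/2}. ph x > 0"
    and t: "t \<in> {-d/2<..<d/2}"
  shows "deriv (deriv (\<lambda>x. ln (ph x))) t = V t - lam - (deriv ph t / ph t)\<^sup>2"
proof -
  have log_deriv: "deriv (\<lambda>x. ln (ph x)) y = deriv ph y / ph y" if "y \<in> {-d/2<..<d/2}" for y
    using dirichlet_eigenfunction_ode(1)[OF ph that] pos that
    by (intro DERIV_imp_deriv) (auto intro!: derivative_eq_intros simp: field_simps)
  have "((\<lambda>y. deriv ph y / ph y) has_real_derivative V t - lam - (deriv ph t / ph t)\<^sup>2) (at t)"
    using dirichlet_eigenfunction_ode[OF ph t] pos t by (intro riccati_log_derivative) (auto simp: less_le)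
  then have "(deriv (\<lambda>x. ln (ph x)) has_real_derivative V t - lam - (deriv ph t / ph t)\<^sup>2) (at t)"
    by (rule has_field_derivative_transform_within_open[OF _ _ t]) (use log_deriv in auto)
  then show ?thesis by (rule DERIV_imp_deriv)
qed

text \<open>Both estimates follow from the Dirichlet gap estimate, choosing beta = -sup (log phi1)''
  and beta = lam1 + inf ((phi1'/phi1)^2 - V) respectively.\<close>
theorem mainTheorem5:
  fixes V V' :: "real \<Rightarrow> real" and d lam1 lam2 s :: real and phi1 :: "real \<Rightarrow> real"
  assumes d_pos: "d > 0"
    and V_C1: "\<forall>x\<in>{-d/2..d/2}. (V has_real_derivative V' x) (at x within {-d/2..d/2})"
    and V'_cont: "continuous_on {-d/2..d/2} V'"
    and V_even: "\<forall>x\<in>{-d/2..d/2}. V (-x) = V x"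
    and lam1: "first_dirichlet_eigenvalue V d lam1"
    and lam2: "second_dirichlet_eigenvalue V d lam2"
    and phi1: "dirichlet_eigenfunction V d lam1 phi1"
    and phi1_pos: "\<forall>x\<in>{-d/2<..<d/2}. phi1 x > 0"
    and s: "0 < s" "s < 1"
  shows "lam2 - lam1 \<ge> 4 * s * (1 - s) * pi\<^sup>2 / d\<^sup>2
            + 2 * s * (- (SUP t\<in>{-d/2<..<d/2}. deriv (deriv (\<lambda>x. ln (phi1 x))) t))
       \<and> lam2 \<ge> (1 + 2 * s) * lam1 + 4 * s * (1 - s) * pi\<^sup>2 / d\<^sup>2
            + 2 * s * (INF t\<in>{-d/2<..<d/2}. (deriv phi1 t / phi1 t)\<^sup>2 - V t)"
proof -
  obtain u where u: "dirichlet_eigenfunction V d lam2 u" and gap: "lam1 < lam2"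
    using first_less_second[OF lam1 lam2] unfolding dirichlet_eigenvalue_def by blast
  have Vc: "continuous_on {-d/2..d/2} V" using V_C1 by (intro DERIV_continuous_on) auto
  obtain MV where MV: "\<And>x. x \<in> {-d/2..d/2} \<Longrightarrow> \<bar>V x\<bar> \<le> MV"
    using continuous_on_Icc_abs_bounded[OF Vc] by blast
  note estimate = dirichlet_gap_estimate[OF d_pos Vc phi1 phi1_pos u gap _ s]
  have log_concavity: "deriv (deriv (\<lambda>x. ln (phi1 x))) t = - ((deriv phi1 t / phi1 t)\<^sup>2 - V t + lam1)"
    if t: "t \<in> {-d/2<..<d/2}" for t
    using log_eigenfunction_second_derivative[OF phi1 phi1_pos t] by simp
  have V_bound: "- MV \<le> (deriv phi1 t / phi1 t)\<^sup>2 - V t" if t: "t \<in> {-d/2<..<d/2}" for t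
  proof -
    have "\<bar>V t\<bar> \<le> MV" using MV[of t] t by simp
    moreover have "0 \<le> (deriv phi1 t / phi1 t)\<^sup>2" by simp
    ultimately show ?thesis by linarith
  qed
  have "bdd_above ((\<lambda>t. deriv (deriv (\<lambda>x. ln (phi1 x))) t) ` {-d/2<..<d/2})"
    using V_bound by (intro bdd_aboveI2[where M="MV - lam1"]) (force simp: log_concavity)
  then have "4 * s * (1 - s) * pi\<^sup>2 / d\<^sup>2
      + 2 * s * (- (SUP t\<in>{-d/2<..<d/2}. deriv (deriv (\<lambda>x. ln (phi1 x))) t)) \<le> lam2 - lam1"
    by (intro estimate) (drule cSUP_upper, auto simp: log_concavity)
  moreover have "bdd_below ((\<lambda>t. (deriv phi1 t / phi1 t)\<^sup>2 - V t) ` {-d/2<..<d/2})"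
    using V_bound by (intro bdd_belowI2[where m="- MV"]) force
  then have "4 * s * (1 - s) * pi\<^sup>2 / d\<^sup>2
      + 2 * s * (lam1 + (INF t\<in>{-d/2<..<d/2}. (deriv phi1 t / phi1 t)\<^sup>2 - V t)) \<le> lam2 - lam1"
    by (intro estimate) (drule cINF_lower, auto)
  ultimately show ?thesis by (simp add: algebra_simps)
qed

end
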